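(* Let $n\geq 2$, $k_n=\lceil\log_2 n\rceil$ (so $n\in(2^{k_n-1},2^{k_n}]$), and let $T_n^{gfb}=(T_a,T_b)$ be the GFB tree with $n$ leaves, where $T_a,T_b$ have $n_a\geq n_b$ leaves. Then: (1) if $n\in(2^{k_n-1},3\cdot2^{k_n-2})$, then $n_a=n-2^{k_n-2}$ and $n_b=2^{k_n-2}$; in particular $T_b$ is the fully balanced tree of height $k_n-2$ and $\lceil\log_2 n_a\rceil=k_n-1$; (2) if $n=3\cdot2^{k_n-2}$, then $n_a=2^{k_n-1}$ and $n_b=2^{k_n-2}$; in particular $T_a$ and $T_b$ are the fully balanced trees of heights $k_n-1$ and $k_n-2$; (3) if $n\in(3\cdot2^{k_n-2},2^{k_n}]$, then $n_a=2^{k_n-1}$ and $n_b=n-2^{k_n-1}$; in particular $T_a$ is the fully balanced tree of height $k_n-1$ and $\lceil\log_2 n_b\rceil=k_n-1$.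
   Context: A rooted binary tree with $n\geq 2$ leaves is a rooted tree whose root has degree 2 and all other internal nodes have degree 3; for $n=1$ it is a single node. Trees are considered up to isomorphism. $T=(T_a,T_b)$ denotes the decomposition into the subtrees rooted at the two children of the root. The fully balanced tree of height $k$ is the rooted binary tree with $2^k$ leaves all at depth $k$. The GFB tree $T_n^{gfb}$ is the output of: start with $n$ single-node trees; while more than one tree remains, remove a tree $u$ of minimal size (number of leaves), then remove a tree $v$ of minimal size among the remaining ones, and insert the tree with a new root whose children are the roots of $u$ and $v$; output the remaining tree. *)

theory Defs
  imports Complex_Main "HOL-Library.Multiset"
begin

datatype btree = Leaf | Node btree btree

fun leaves :: "btree \<Rightarrow> nat" where
  "leaves Leaf = 1"
| "leaves (Node l r) = leaves l + leaves r"

fun iso :: "btree \<Rightarrow> btree \<Rightarrow> bool" where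
  "iso Leaf Leaf = True"
| "iso (Node a b) (Node c d) = ((iso a c \<and> iso b d) \<or> (iso a d \<and> iso b c))"
| "iso _ _ = False"

fun fb :: "nat \<Rightarrow> btree" where
  "fb 0 = Leaf"
| "fb (Suc k) = Node (fb k) (fb k)"

text \<open>One step of the GFB procedure (any tie-breaking allowed).\<close>
definition gfb_step :: "btree multiset \<Rightarrow> btree multiset \<Rightarrow> bool" where
  "gfb_step M M' \<longleftrightarrow> (\<exists>u v.
      u \<in># M \<and> (\<forall>w\<in>#M. leaves u \<le> leaves w) \<and>
      v \<in># M - {#u#} \<and> (\<forall>w\<in>#M - {#u#}. leaves v \<le> leaves w) \<and>
      M' = M - {#u, v#} + {#Node u v#})"

definition gfb_output :: "nat \<Rightarrow> btree \<Rightarrow> bool" where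
  "gfb_output n T \<longleftrightarrow> gfb_step\<^sup>*\<^sup>* (replicate_mset n Leaf) {#T#}"

end

(*
  Throughout the GFB procedure the forest consists of fully balanced trees of two consecutive
  heights j and j + 1 together with at most one tree whose size lies strictly between 2^j and
  2^(j+1). These three kinds of trees are strictly ordered by size, so the two trees merged in a
  step are the two smallest ones, and every possible merge preserves this shape (with j or j + 1).
  Hence the last merge joins a fully balanced tree of height j with one of height j or j + 1 or
  with the intermediate tree, or joins the intermediate tree with a fully balanced tree of height
  j + 1; these cases correspond to n being a power of two, to n = 3 * 2^j, and to the two open
  ranges of the statement.
*)
theory Submission
  imports Defs
begin

lemma leaves_fb [simp]: "leaves (fb k) = 2 ^ k"
  by (induction k) auto

lemma iso_refl [simp]: "iso t t"
  by (induction t) auto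

lemma ceiling_log2_eq: "2 ^ m < r \<Longrightarrow> r \<le> 2 ^ Suc m \<Longrightarrow> \<lceil>log 2 (real r)\<rceil> = int m + 1"
  using ceiling_log_nat_eq_if[of 2 m r] by simp

lemma gfb_stepE:
  assumes "gfb_step M M'"
  obtains u v M1 where "M = add_mset u (add_mset v M1)" "M' = add_mset (Node u v) M1"
    "\<forall>w\<in>#M. leaves u \<le> leaves w" "\<forall>w\<in>#add_mset v M1. leaves v \<le> leaves w"
proof -
  from assms obtain u v where u: "u \<in># M" "\<forall>w\<in>#M. leaves u \<le> leaves w"
    and v: "v \<in># M - {#u#}" "\<forall>w\<in>#M - {#u#}. leaves v \<le> leaves w"
    and M': "M' = M - {#u, v#} + {#Node u v#}"
    unfolding gfb_step_def by blast
  obtain M1 where M1: "M - {#u#} = add_mset v M1"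
    using v(1) by (metis insert_DiffM)
  then have "M = add_mset u (add_mset v M1)"
    using u(1) by (metis insert_DiffM)
  with that show ?thesis
    using M' M1 u(2) v(2) by simp
qed

lemma gfb_step_sum_leaves:
  "gfb_step M M' \<Longrightarrow> (\<Sum>t\<in>#M'. leaves t) = (\<Sum>t\<in>#M. leaves t)"
  by (erule gfb_stepE) simp

definition between_levels :: "nat \<Rightarrow> btree \<Rightarrow> bool" where
  "between_levels j t \<longleftrightarrow> 2 ^ j < leaves t \<and> leaves t < 2 ^ Suc j"

definition levelled_forest :: "nat \<Rightarrow> btree multiset \<Rightarrow> bool" where
  "levelled_forest j M \<longleftrightarrow>
     (\<forall>t\<in>#M. t = fb j \<or> t = fb (Suc j) \<or> between_levels j t) \<and>
     size (filter_mset (between_levels j) M) \<le> 1"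

lemma levelled_forest_replicate_Leaf: "levelled_forest 0 (replicate_mset n Leaf)"
proof -
  have no_mid: "size (filter_mset (between_levels 0) (replicate_mset n Leaf)) = 0"
    by (simp add: between_levels_def)
  show ?thesis
    by (simp add: levelled_forest_def no_mid)
qed

lemma levelled_forest_SucI:
  assumes "\<forall>t\<in>#M. t = fb (Suc j)" and "X = fb (Suc (Suc j)) \<or> between_levels (Suc j) X"
  shows "levelled_forest (Suc j) (add_mset X M)"
proof -
  have no_mid: "size (filter_mset (between_levels (Suc j)) M) = 0"
    using assms(1) by (auto simp: between_levels_def)
  show ?thesis
    using assms by (auto simp: levelled_forest_def no_mid)
qed

lemma gfb_step_levelled_forest:
  assumes step: "gfb_step M M'" and lev: "levelled_forest j M"
  shows "levelled_forest j M' \<or> levelled_forest (Suc j) M'"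
proof -
  obtain u v M1 where M: "M = add_mset u (add_mset v M1)" and M': "M' = add_mset (Node u v) M1"
    and u_min: "\<forall>w\<in>#M. leaves u \<le> leaves w" and v_min: "\<forall>w\<in>#add_mset v M1. leaves v \<le> leaves w"
    using step by (rule gfb_stepE)
  have classes: "\<forall>t\<in>#M. t = fb j \<or> t = fb (Suc j) \<or> between_levels j t"
    and single_mid: "size (filter_mset (between_levels j) M) \<le> 1"
    using lev by (auto simp: levelled_forest_def)
  have top: "t = fb (Suc j)" if "t \<in># M" "2 ^ Suc j \<le> leaves t" for t
    using classes that by (auto simp: between_levels_def)
  show ?thesis
  proof (cases "u = fb j \<and> v = fb j")
    case True
    then have "M' = add_mset (fb (Suc j)) M1"
      using M' by simp
    moreover have "filter_mset (between_levels j) M1 \<subseteq># filter_mset (between_levels j) M"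
      by (intro multiset_filter_mono) (simp add: M)
    then have "size (filter_mset (between_levels j) M1) \<le> 1"
      using single_mid size_mset_mono by fastforce
    ultimately show ?thesis
      using classes M by (auto simp: levelled_forest_def between_levels_def)
  next
    case False
    have "v \<noteq> fb j"
      using False u_min classes M by (auto simp: between_levels_def)
    then have above_j: "2 ^ j < leaves w" if "w \<in># add_mset v M1" for w
      using that v_min classes M by (force simp: between_levels_def)
    have no_mid: "\<not> between_levels j w" if "w \<in># M1" "between_levels j u \<or> between_levels j v" for w
      using single_mid that M by (auto split: if_splits)
    have not_both_mid: "\<not> (between_levels j u \<and> between_levels j v)"
      using single_mid M by auto
    consider (fb_fb) "u = fb j" "v = fb (Suc j)" | (fb_mid) "u = fb j" "between_levels j v"
      | (mid_fb) "between_levels j u" "v = fb (Suc j)" | (top_top) "u = fb (Suc j)" "v = fb (Suc j)"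
      using classes M u_min above_j not_both_mid \<open>v \<noteq> fb j\<close>
      by (auto simp: between_levels_def)
    then have "(\<forall>t\<in>#M1. t = fb (Suc j)) \<and> (Node u v = fb (Suc (Suc j)) \<or> between_levels (Suc j) (Node u v))"
    proof cases
      case fb_mid
      have "t = fb (Suc j)" if "t \<in># M1" for t
        using classes above_j[of t] no_mid[of t] that fb_mid M by auto
      then show ?thesis
        using fb_mid by (auto simp: between_levels_def)
    qed (use top v_min M in \<open>auto simp: between_levels_def\<close>)
    then show ?thesis
      using levelled_forest_SucI M' by blast
  qed
qed

lemma gfb_reachable_levelled_forest:
  assumes "gfb_step\<^sup>*\<^sup>* (replicate_mset n Leaf) M"
  shows "(\<exists>j. levelled_forest j M) \<and> (\<Sum>t\<in>#M. leaves t) = n"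
  using assms
proof (induction rule: rtranclp_induct)
  case base
  show ?case
    using levelled_forest_replicate_Leaf by auto
next
  case (step M M')
  then show ?case
    using gfb_step_levelled_forest gfb_step_sum_leaves by metis
qed

definition last_merge :: "nat \<Rightarrow> btree \<Rightarrow> btree \<Rightarrow> bool" where
  "last_merge j u v \<longleftrightarrow>
     u = fb j \<and> (v = fb j \<or> v = fb (Suc j) \<or> between_levels j v) \<or>
     between_levels j u \<and> v = fb (Suc j)"

lemma gfb_output_root:
  assumes "n \<ge> 2" and "gfb_output n T"
  obtains u v j where "T = Node u v" "n = leaves u + leaves v" "last_merge j u v"
proof -
  obtain M where reach: "gfb_step\<^sup>*\<^sup>* (replicate_mset n Leaf) M" and last: "gfb_step M {#T#}"
    using assms(2) unfolding gfb_output_def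
  proof (cases rule: rtranclp.cases)
    case rtrancl_refl
    then have "n = 1"
      by (metis size_replicate_mset size_single)
    with assms(1) show ?thesis
      by simp
  qed
  obtain u v M1 where M: "M = add_mset u (add_mset v M1)" and T: "{#T#} = add_mset (Node u v) M1"
    and u_min: "\<forall>w\<in>#M. leaves u \<le> leaves w"
    using last by (rule gfb_stepE)
  have M_uv: "M = {#u, v#}" and T_uv: "T = Node u v"
    using M T by auto
  obtain j where lev: "levelled_forest j M" and sum: "n = leaves u + leaves v"
    using gfb_reachable_levelled_forest[OF reach] M_uv by auto
  have "leaves u \<le> leaves v"
    using u_min M_uv by simp
  moreover have "u = fb j \<or> u = fb (Suc j) \<or> between_levels j u"
    and "v = fb j \<or> v = fb (Suc j) \<or> between_levels j v"
    and "\<not> (between_levels j u \<and> between_levels j v)"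
    using lev M_uv by (auto simp: levelled_forest_def)
  ultimately have "last_merge j u v \<or> last_merge (Suc j) u v"
    by (auto simp: last_merge_def between_levels_def)
  then show ?thesis
    using that[OF T_uv sum] by blast
qed

lemma root_subtree_sizes:
  assumes "last_merge j u v"
  defines "n \<equiv> leaves u + leaves v"
  defines "k \<equiv> nat \<lceil>log 2 (real n)\<rceil>"
  shows "(2 * 2 ^ k < 4 * n \<and> 4 * n < 3 * 2 ^ k \<longrightarrow>
         leaves v = n - 2 ^ (k - 2) \<and> leaves u = 2 ^ (k - 2) \<and>
         iso u (fb (k - 2)) \<and> \<lceil>log 2 (real (leaves v))\<rceil> = int k - 1) \<and>
      (4 * n = 3 * 2 ^ k \<longrightarrow>
         leaves v = 2 ^ (k - 1) \<and> leaves u = 2 ^ (k - 2) \<and>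
         iso v (fb (k - 1)) \<and> iso u (fb (k - 2))) \<and>
      (3 * 2 ^ k < 4 * n \<and> n \<le> 2 ^ k \<longrightarrow>
         leaves v = 2 ^ (k - 1) \<and> leaves u = n - 2 ^ (k - 1) \<and>
         iso v (fb (k - 1)) \<and> \<lceil>log 2 (real (leaves u))\<rceil> = int k - 1)"
  using assms(1) unfolding last_merge_def
proof (elim disjE conjE)
  assume "u = fb j" "v = fb j"
  moreover from this have "k = Suc j"
    using ceiling_log2_eq[of j n] by (simp add: n_def k_def)
  ultimately show ?thesis
    by (simp add: n_def)
next
  assume "u = fb j" "v = fb (Suc j)"
  moreover from this have "k = Suc (Suc j)"
    using ceiling_log2_eq[of "Suc j" n] by (simp add: n_def k_def)
  ultimately show ?thesis
    by (simp add: n_def)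
next
  assume "u = fb j" "between_levels j v"
  moreover from this have "k = Suc (Suc j)"
    using ceiling_log2_eq[of "Suc j" n] by (simp add: n_def k_def between_levels_def)
  ultimately show ?thesis
    using ceiling_log2_eq[of j "leaves v"] by (simp add: n_def between_levels_def)
next
  assume "between_levels j u" "v = fb (Suc j)"
  moreover from this have "k = Suc (Suc j)"
    using ceiling_log2_eq[of "Suc j" n] by (simp add: n_def k_def between_levels_def)
  ultimately show ?thesis
    using ceiling_log2_eq[of j "leaves u"] by (simp add: n_def between_levels_def)
qed

theorem proposition2:
  fixes n :: nat and T :: btree
  assumes "n \<ge> 2" and "gfb_output n T"
  defines "k \<equiv> nat \<lceil>log 2 (real n)\<rceil>"
  shows "(\<exists>l r. T = Node l r) \<and>
    (\<forall>Ta Tb. (T = Node Ta Tb \<or> T = Node Tb Ta) \<and> leaves Ta \<ge> leaves Tb \<longrightarrow>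
      (2 * 2 ^ k < 4 * n \<and> 4 * n < 3 * 2 ^ k \<longrightarrow>
         leaves Ta = n - 2 ^ (k - 2) \<and> leaves Tb = 2 ^ (k - 2) \<and>
         iso Tb (fb (k - 2)) \<and> \<lceil>log 2 (real (leaves Ta))\<rceil> = int k - 1) \<and>
      (4 * n = 3 * 2 ^ k \<longrightarrow>
         leaves Ta = 2 ^ (k - 1) \<and> leaves Tb = 2 ^ (k - 2) \<and>
         iso Ta (fb (k - 1)) \<and> iso Tb (fb (k - 2))) \<and>
      (3 * 2 ^ k < 4 * n \<and> n \<le> 2 ^ k \<longrightarrow>
         leaves Ta = 2 ^ (k - 1) \<and> leaves Tb = n - 2 ^ (k - 1) \<and>
         iso Ta (fb (k - 1)) \<and> \<lceil>log 2 (real (leaves Tb))\<rceil> = int k - 1))"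
proof -
  obtain u v j where T: "T = Node u v" and n: "n = leaves u + leaves v"
    and root: "last_merge j u v"
    using assms(1,2) by (rule gfb_output_root)
  have children: "Ta = v \<and> Tb = u"
    if "(T = Node Ta Tb \<or> T = Node Tb Ta) \<and> leaves Ta \<ge> leaves Tb" for Ta Tb
    using that T root by (auto simp: last_merge_def between_levels_def)
  show ?thesis
    using root_subtree_sizes[OF root] children T unfolding k_def n by blast
qed

end
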